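(* Let $G$ be a topological group and $H$ a normal, closed, discrete subgroup of $G$, acting on $G$ on the right by $(g,h)\mapsto g\cdot h$. Let $U$ be an open symmetric neighborhood of $1_G$ (i.e. $U=U^{-1}$) such that $U^4\cap H=\{1_G\}$, where $U^4=U\cdot U\cdot U\cdot U$. Then the family $\{U\cdot g\}_{g\in G}$ is an overlay structure of this action of $H$ on $G$.
   Context: For a continuous map $p:X\to Y$: a slice of $p$ is an open set $U\subseteq X$ such that $p^{-1}(p(U))$ is the disjoint union of a family of open sets $U_s$ ($s\in S$), each mapped by $p$ homeomorphically onto $p(U)$, with $U=U_t$ for some $t\in S$. A covering structure of $p$ is an open cover $\mathcal S$ of $X$ by slices of $p$ such that for every $U\in\mathcal S$, $p^{-1}(p(U))$ is the disjoint union of a family $\{U_j\}_{j\in J}$ of elements of $\mathcal S$, each mapped homeomorphically onto $p(U)$. For a cover $\mathcal S$ and $x\in X$, $st(x,\mathcal S)=\bigcup\{U\in\mathcal S: x\in U\}$. For a free action of a group $H$ on $X$: a slice of the action is an open $U\subseteq X$ with $U\cap(h\cdot U)\neq\emptyset\Rightarrow h=1_H$. An overlay structure of the action is a covering structure $\mathcal U$ of the projection $X\to X/H$ (orbit space with quotient topology) such that $st(x,\mathcal U)$ is a slice of the action for every $x\in X$. *)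

theory Defs
  imports "HOL-Analysis.Analysis"
begin

definition slice :: "'a topology \<Rightarrow> 'b topology \<Rightarrow> ('a \<Rightarrow> 'b) \<Rightarrow> 'a set \<Rightarrow> bool" where
  "slice X Y p U \<longleftrightarrow> openin X U \<and>
     (\<exists>S. U \<in> S \<and> pairwise disjnt S \<and>
          \<Union>S = {x \<in> topspace X. p x \<in> p ` U} \<and>
          (\<forall>V\<in>S. openin X V \<and> homeomorphic_map (subtopology X V) (subtopology Y (p ` U)) p))"

definition covering_structure :: "'a topology \<Rightarrow> 'b topology \<Rightarrow> ('a \<Rightarrow> 'b) \<Rightarrow> 'a set set \<Rightarrow> bool" where
  "covering_structure X Y p \<S> \<longleftrightarrow>
     (\<forall>U\<in>\<S>. slice X Y p U) \<and> \<Union>\<S> = topspace X \<and>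
     (\<forall>U\<in>\<S>. \<exists>\<J>. \<J> \<subseteq> \<S> \<and> pairwise disjnt \<J> \<and>
          \<Union>\<J> = {x \<in> topspace X. p x \<in> p ` U} \<and>
          (\<forall>V\<in>\<J>. homeomorphic_map (subtopology X V) (subtopology Y (p ` U)) p))"

definition star :: "'a \<Rightarrow> 'a set set \<Rightarrow> 'a set" where
  "star x \<S> = \<Union>{U \<in> \<S>. x \<in> U}"

text \<open>Groups are written additively (type class topological_group_add, not necessarily
commutative); the right action of h on g is g + h.\<close>

definition orbit_proj :: "'a::group_add set \<Rightarrow> 'a \<Rightarrow> 'a set" where
  "orbit_proj H x = (\<lambda>h. x + h) ` H"

definition orbit_space :: "'a::topological_group_add set \<Rightarrow> 'a set topology" where
  "orbit_space H = topology (\<lambda>V. V \<subseteq> range (orbit_proj H) \<and> open (orbit_proj H -` V))"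

lemma istopology_orbit_space:
  "istopology (\<lambda>V. V \<subseteq> range (orbit_proj H) \<and> open (orbit_proj H -` V))"
  unfolding istopology_def by (auto simp: vimage_Union)

definition action_slice :: "'a::topological_group_add set \<Rightarrow> 'a set \<Rightarrow> bool" where
  "action_slice H U \<longleftrightarrow> open U \<and> (\<forall>h\<in>H. U \<inter> (\<lambda>x. x + h) ` U \<noteq> {} \<longrightarrow> h = 0)"

definition overlay_structure :: "'a::topological_group_add set \<Rightarrow> 'a set set \<Rightarrow> bool" where
  "overlay_structure H \<U> \<longleftrightarrow>
     covering_structure euclidean (orbit_space H) (orbit_proj H) \<U> \<and>
     (\<forall>x. action_slice H (star x \<U>))"

definition normal_subgroup :: "'a::group_add set \<Rightarrow> bool" where
  "normal_subgroup H \<longleftrightarrow> 0 \<in> H \<and> (\<forall>a\<in>H. \<forall>b\<in>H. a + b \<in> H) \<and> (\<forall>a\<in>H. - a \<in> H) \<and>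
     (\<forall>g. \<forall>h\<in>H. g + h - g \<in> H)"

end

theory Submission
  imports Defs
begin

text \<open>The star of x with respect to the translates U + g lies in U - U + x. If z = w + h with
z, w \<in> U - U + x and h \<in> H, then the conjugate x + h - x lies in U U U U \<inter> H = {0}, so h = 0:
stars, and hence the translates U + g themselves, are slices of the action. Any family of slices
of the action that covers G and is closed under translation by H is a covering structure of the
orbit projection: the H-translates of a slice are pairwise disjoint, fill its saturation, and are
mapped homeomorphically onto its image, since the projection is a continuous open map that is
injective on slices.\<close>

lemma open_right_translation:
  fixes W :: "'a::topological_group_add set"
  assumes "open W"
  shows "open ((\<lambda>x. x + g) ` W)"
proof -
  have "(\<lambda>x. x + g) ` W = (\<lambda>x. x + - g) -` W"
    by (auto simp: image_iff add.assoc intro!: bexI[where x="_ + - g"])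
  moreover have "open ((\<lambda>x. x + - g) -` W)"
    by (rule open_vimage[OF assms]) (intro continuous_intros)
  ultimately show ?thesis
    by simp
qed

lemma normal_subgroup_diff:
  assumes "normal_subgroup H" "h \<in> H" "k \<in> H"
  shows "h - k \<in> H"
  using assms unfolding normal_subgroup_def by (metis diff_conv_add_uminus)

lemma orbit_proj_eq_iff:
  assumes "normal_subgroup H"
  shows "orbit_proj H x = orbit_proj H y \<longleftrightarrow> (\<exists>h\<in>H. x = y + h)"
proof
  assume "orbit_proj H x = orbit_proj H y"
  moreover have "x \<in> orbit_proj H x"
    using assms unfolding orbit_proj_def normal_subgroup_def by (auto intro!: image_eqI[of _ _ 0])
  ultimately show "\<exists>h\<in>H. x = y + h"
    unfolding orbit_proj_def by auto
next
  assume "\<exists>h\<in>H. x = y + h"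
  then obtain h where h: "h \<in> H" "x = y + h"
    by auto
  have "(\<lambda>k. h + k) ` H = H"
  proof (intro set_eqI iffI)
    fix k assume "k \<in> H"
    then have "-h + k \<in> H" and "k = h + (-h + k)"
      using h(1) assms unfolding normal_subgroup_def by (auto simp: add.assoc[symmetric])
    then show "k \<in> (\<lambda>k. h + k) ` H"
      by blast
  qed (use h(1) assms in \<open>auto simp: normal_subgroup_def\<close>)
  then show "orbit_proj H x = orbit_proj H y"
    unfolding orbit_proj_def h(2) by (metis (no_types, lifting) add.assoc image_image image_cong)
qed

lemma orbit_proj_right_translate:
  assumes "normal_subgroup H" "h \<in> H"
  shows "orbit_proj H (x + h) = orbit_proj H x"
  using assms orbit_proj_eq_iff by blast

lemma openin_orbit_space:
  "openin (orbit_space H) V \<longleftrightarrow> V \<subseteq> range (orbit_proj H) \<and> open (orbit_proj H -` V)"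
  unfolding orbit_space_def by (simp add: topology_inverse'[OF istopology_orbit_space])

lemma topspace_orbit_space: "topspace (orbit_space H) = range (orbit_proj H)"
proof (rule subset_antisym)
  show "topspace (orbit_space H) \<subseteq> range (orbit_proj H)"
    using openin_orbit_space[of H "topspace (orbit_space H)"] by simp
  have "openin (orbit_space H) (range (orbit_proj H))"
    by (simp add: openin_orbit_space vimage_def)
  then show "range (orbit_proj H) \<subseteq> topspace (orbit_space H)"
    by (rule openin_subset)
qed

lemma continuous_map_orbit_proj: "continuous_map euclidean (orbit_space H) (orbit_proj H)"
  unfolding continuous_map_def topspace_orbit_space openin_orbit_space by (auto simp: vimage_def)

lemma vimage_orbit_proj_image:
  assumes "normal_subgroup H"
  shows "orbit_proj H -` orbit_proj H ` W = (\<Union>h\<in>H. (\<lambda>x. x + h) ` W)"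
  using orbit_proj_eq_iff[OF assms] by (auto simp: image_iff) blast+

lemma open_map_orbit_proj:
  assumes "normal_subgroup H"
  shows "open_map euclidean (orbit_space H) (orbit_proj H)"
  unfolding open_map_def openin_orbit_space vimage_orbit_proj_image[OF assms]
  by (auto intro!: open_UN open_right_translation)

lemma orbit_proj_image_right_translate:
  assumes "normal_subgroup H" "h \<in> H"
  shows "orbit_proj H ` (\<lambda>x. x + h) ` W = orbit_proj H ` W"
  using orbit_proj_right_translate[OF assms] by (simp add: image_image)

lemma action_slice_subset:
  assumes "action_slice H V" "W \<subseteq> V" "open W"
  shows "action_slice H W"
  using assms unfolding action_slice_def by blast

lemma inj_on_orbit_proj:
  assumes "normal_subgroup H" "action_slice H W"
  shows "inj_on (orbit_proj H) W"
proof (rule inj_onI)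
  fix x y assume "x \<in> W" "y \<in> W" "orbit_proj H x = orbit_proj H y"
  then obtain h where "h \<in> H" "x = y + h"
    using orbit_proj_eq_iff[OF assms(1)] by blast
  moreover from \<open>x \<in> W\<close> \<open>y \<in> W\<close> \<open>x = y + h\<close> have "x \<in> W \<inter> (\<lambda>z. z + h) ` W"
    by blast
  ultimately have "h = 0"
    using assms(2) unfolding action_slice_def by blast
  with \<open>x = y + h\<close> show "x = y"
    by simp
qed

lemma homeomorphic_map_orbit_proj:
  assumes "normal_subgroup H" "action_slice H W"
  shows "homeomorphic_map (subtopology euclidean W)
           (subtopology (orbit_space H) (orbit_proj H ` W)) (orbit_proj H)"
proof (rule bijective_open_imp_homeomorphic_map)
  have "open W"
    using assms(2) unfolding action_slice_def by blast
  show "continuous_map (subtopology euclidean W)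
          (subtopology (orbit_space H) (orbit_proj H ` W)) (orbit_proj H)"
    by (rule continuous_map_into_subtopology
        [OF continuous_map_from_subtopology[OF continuous_map_orbit_proj]]) auto
  show "open_map (subtopology euclidean W)
          (subtopology (orbit_space H) (orbit_proj H ` W)) (orbit_proj H)"
    by (rule open_map_into_subtopology
        [OF open_map_from_subtopology[OF open_map_orbit_proj[OF assms(1)]]]) (use \<open>open W\<close> in auto)
  show "orbit_proj H ` topspace (subtopology euclidean W)
          = topspace (subtopology (orbit_space H) (orbit_proj H ` W))"
    by (auto simp: topspace_orbit_space)
  show "inj_on (orbit_proj H) (topspace (subtopology euclidean W))"
    using inj_on_orbit_proj[OF assms] by simp
qed

lemma pairwise_disjnt_right_translates:
  assumes "normal_subgroup H" "action_slice H W"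
  shows "pairwise disjnt ((\<lambda>h. (\<lambda>x. x + h) ` W) ` H)"
  unfolding pairwise_def disjnt_def
proof (intro ballI impI)
  fix A B assume "A \<in> (\<lambda>h. (\<lambda>x. x + h) ` W) ` H" "B \<in> (\<lambda>h. (\<lambda>x. x + h) ` W) ` H" "A \<noteq> B"
  then obtain h k where hk: "h \<in> H" "k \<in> H" "A = (\<lambda>x. x + h) ` W" "B = (\<lambda>x. x + k) ` W" "h \<noteq> k"
    by auto
  show "A \<inter> B = {}"
  proof (rule ccontr)
    assume "A \<inter> B \<noteq> {}"
    then obtain w w' where w: "w \<in> W" "w' \<in> W" "w + h = w' + k"
      using hk(3,4) by auto
    then have "w = w' + (k - h)"
      by (metis add.assoc add_diff_cancel diff_add_cancel)
    moreover have "k - h \<in> H"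
      using normal_subgroup_diff[OF assms(1) hk(2,1)] .
    ultimately have "k - h = 0"
      using assms(2) w(1,2) unfolding action_slice_def by blast
    with hk(5) show False
      by simp
  qed
qed

lemma covering_structure_of_action_slices:
  assumes H: "normal_subgroup H"
    and slices: "\<And>W. W \<in> \<S> \<Longrightarrow> action_slice H W"
    and cover: "\<Union>\<S> = UNIV"
    and translates: "\<And>W h. W \<in> \<S> \<Longrightarrow> h \<in> H \<Longrightarrow> (\<lambda>x. x + h) ` W \<in> \<S>"
  shows "covering_structure euclidean (orbit_space H) (orbit_proj H) \<S>"
proof -
  let ?p = "orbit_proj H"
  let ?\<J> = "\<lambda>W. (\<lambda>h. (\<lambda>x. x + h) ` W) ` H"
  have translates_homeomorphic: "openin euclidean V \<and>
      homeomorphic_map (subtopology euclidean V) (subtopology (orbit_space H) (?p ` W)) ?p"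
    if W: "W \<in> \<S>" and V: "V \<in> ?\<J> W" for W V
  proof -
    obtain h where "h \<in> H" "V = (\<lambda>x. x + h) ` W"
      using V by blast
    then have "action_slice H V" "?p ` V = ?p ` W"
      using slices translates W orbit_proj_image_right_translate[OF H] by auto
    then show ?thesis
      using homeomorphic_map_orbit_proj[OF H, of V] by (simp add: action_slice_def)
  qed
  have translates_union: "\<Union>(?\<J> W) = {x \<in> topspace euclidean. ?p x \<in> ?p ` W}" for W
  proof -
    have "{x \<in> topspace euclidean. ?p x \<in> ?p ` W} = ?p -` ?p ` W"
      by auto
    then show ?thesis
      using vimage_orbit_proj_image[OF H, of W] by simp
  qed
  have translates_disjnt: "pairwise disjnt (?\<J> W)" if "W \<in> \<S>" for W
    using pairwise_disjnt_right_translates[OF H slices[OF that]] .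
  have "0 \<in> H"
    using H unfolding normal_subgroup_def by blast
  then have "W \<in> ?\<J> W" for W
    by (force intro: image_eqI[of _ _ 0])
  moreover have "?\<J> W \<subseteq> \<S>" if "W \<in> \<S>" for W
    using translates that by blast
  moreover have "open W" if "W \<in> \<S>" for W
    using slices[OF that] unfolding action_slice_def by blast
  ultimately show ?thesis
    unfolding covering_structure_def slice_def
    using cover translates_homeomorphic translates_union translates_disjnt
    by (intro conjI ballI exI[of _ "?\<J> _"]) auto
qed

lemma right_translate_of_UU_eq_zero:
  fixes U :: "'a::group_add set"
  assumes "normal_subgroup H" "uminus ` U = U"
    and U4: "{a + b + c + d | a b c d. a \<in> U \<and> b \<in> U \<and> c \<in> U \<and> d \<in> U} \<inter> H = {0}"
    and "u1 \<in> U" "u1' \<in> U" "u2 \<in> U" "u2' \<in> U" "h \<in> H"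
    and eq: "u1 - u1' + x = u2 - u2' + x + h"
  shows "h = 0"
proof -
  define c where "c = x + h - x"
  have "c \<in> H"
    unfolding c_def using assms(1,8) unfolding normal_subgroup_def by blast
  have "u1 - u1' = u2 - u2' + c"
    unfolding c_def using eq by (metis add.assoc add_diff_cancel diff_add_cancel)
  then have "c = u2' + - u2 + u1 + - u1'"
    by (metis add.assoc minus_add_cancel minus_diff_eq diff_conv_add_uminus)
  moreover have "- u1' \<in> U" "- u2 \<in> U"
    using assms(2,5,6) by blast+
  ultimately have "c \<in> {a + b + c + d | a b c d. a \<in> U \<and> b \<in> U \<and> c \<in> U \<and> d \<in> U}"
    using assms(4,7) by blast
  with \<open>c \<in> H\<close> U4 have "x + h - x = 0"
    unfolding c_def by blast
  then have "x + h = x"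
    by (simp add: diff_eq_eq)
  then show "h = 0"
    by (metis add_left_imp_eq add.right_neutral)
qed

lemma star_right_translates_subset:
  fixes U :: "'a::group_add set"
  shows "star x (range (\<lambda>g. (\<lambda>u. u + g) ` U)) \<subseteq> {u - u' + x | u u'. u \<in> U \<and> u' \<in> U}"
proof
  fix z assume "z \<in> star x (range (\<lambda>g. (\<lambda>u. u + g) ` U))"
  then obtain g u u' where "u \<in> U" "u' \<in> U" "z = u + g" "x = u' + g"
    unfolding star_def by auto
  then have "z = u - u' + x"
    by (simp add: add.assoc[symmetric])
  with \<open>u \<in> U\<close> \<open>u' \<in> U\<close> show "z \<in> {u - u' + x | u u'. u \<in> U \<and> u' \<in> U}"
    by blast
qed

lemma right_translate_subset_star:
  fixes U :: "'a::group_add set"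
  assumes "0 \<in> U"
  shows "(\<lambda>u. u + g) ` U \<subseteq> star g (range (\<lambda>g. (\<lambda>u. u + g) ` U))"
proof -
  have "g \<in> (\<lambda>u. u + g) ` U"
    using assms by (force intro: image_eqI[of _ _ 0])
  then show ?thesis
    unfolding star_def by blast
qed

lemma action_slice_star_right_translates:
  fixes U :: "'a::topological_group_add set"
  assumes "normal_subgroup H" "open U" "uminus ` U = U"
    and "{a + b + c + d | a b c d. a \<in> U \<and> b \<in> U \<and> c \<in> U \<and> d \<in> U} \<inter> H = {0}"
  shows "action_slice H (star x (range (\<lambda>g. (\<lambda>u. u + g) ` U)))"
  unfolding action_slice_def
proof (intro conjI ballI impI)
  show "open (star x (range (\<lambda>g. (\<lambda>u. u + g) ` U)))"
    unfolding star_def using open_right_translation[OF assms(2)] by auto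
  fix h assume "h \<in> H" and
    "star x (range (\<lambda>g. (\<lambda>u. u + g) ` U)) \<inter> (\<lambda>z. z + h) ` star x (range (\<lambda>g. (\<lambda>u. u + g) ` U)) \<noteq> {}"
  then obtain z w where "z \<in> star x (range (\<lambda>g. (\<lambda>u. u + g) ` U))"
    "w \<in> star x (range (\<lambda>g. (\<lambda>u. u + g) ` U))" "z = w + h"
    by blast
  moreover obtain u1 u1' where "u1 \<in> U" "u1' \<in> U" "z = u1 - u1' + x"
    using star_right_translates_subset calculation(1) by blast
  moreover obtain u2 u2' where "u2 \<in> U" "u2' \<in> U" "w = u2 - u2' + x"
    using star_right_translates_subset calculation(2) by blast
  ultimately show "h = 0"
    using right_translate_of_UU_eq_zero[OF assms(1,3,4)] \<open>h \<in> H\<close> by metis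
qed

theorem proposition3p5:
  fixes H U :: "'a::topological_group_add set"
  assumes "normal_subgroup H"
    and "closed H"
    and "subtopology euclidean H = discrete_topology H"
    and "open U" and "0 \<in> U" and "uminus ` U = U"
    and "{a + b + c + d | a b c d. a \<in> U \<and> b \<in> U \<and> c \<in> U \<and> d \<in> U} \<inter> H = {0}"
  shows "overlay_structure H (range (\<lambda>g. (\<lambda>u. u + g) ` U))"
proof -
  let ?\<S> = "range (\<lambda>g. (\<lambda>u. u + g) ` U)"
  have stars: "action_slice H (star x ?\<S>)" for x
    using action_slice_star_right_translates[OF assms(1,4,6,7)] .
  have "action_slice H ((\<lambda>u. u + g) ` U)" for g
    using action_slice_subset[OF stars right_translate_subset_star[OF \<open>0 \<in> U\<close>]]
      open_right_translation[OF assms(4)] .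
  moreover have "g \<in> (\<lambda>u. u + g) ` U" for g
    using \<open>0 \<in> U\<close> by (force intro: image_eqI[of _ _ 0])
  moreover have "(\<lambda>x. x + h) ` ((\<lambda>u. u + g) ` U) = (\<lambda>u. u + (g + h)) ` U" for g h
    by (simp add: image_image add.assoc)
  ultimately have "covering_structure euclidean (orbit_space H) (orbit_proj H) ?\<S>"
    by (intro covering_structure_of_action_slices[OF assms(1)]) auto
  with stars show ?thesis
    unfolding overlay_structure_def by blast
qed

end
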